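(* Let $v_1,v_2$ be two (smooth) solutions of $( * )$ on $X$ such that, for some $C>0$ and $\epsilon\in(0,1)$, $0\le v_2-v_1\le C(y^{\epsilon}+y^{1-\epsilon})$ on all of $X$. Then $v_1=v_2$.
   Context: $X=\mathbb{R}^2\times(0,+\infty)$ with coordinates $(x_1,x_2,y)$, $z=x_1+ix_2$, $\Delta=\partial_1^2+\partial_2^2+\partial_y^2$; $P(z)$ is a non-zero complex polynomial; $( * )$ is the equation $\Delta u+e^{-2u}|P(z)|^2=0$ on $X$. *)

theory Defs
  imports "HOL-Analysis.Analysis" "HOL-Computational_Algebra.Polynomial"
begin

text \<open>Points of R^3 are vectors p :: real^3 with p$1 = x1, p$2 = x2, p$3 = y.\<close>

definition halfspaceX :: "(real^3) set" where
  "halfspaceX = {p. p $ 3 > 0}"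

fun iter_pd :: "'a::euclidean_space list \<Rightarrow> ('a \<Rightarrow> real) \<Rightarrow> 'a \<Rightarrow> real" where
  "iter_pd [] f = f"
| "iter_pd (v # vs) f = (\<lambda>x. frechet_derivative (iter_pd vs f) (at x) v)"

definition smooth_on :: "'a::euclidean_space set \<Rightarrow> ('a \<Rightarrow> real) \<Rightarrow> bool" where
  "smooth_on S f \<longleftrightarrow> (\<forall>vs. set vs \<subseteq> Basis \<longrightarrow> iter_pd vs f differentiable_on S)"

definition laplacian3 :: "(real^3 \<Rightarrow> real) \<Rightarrow> real^3 \<Rightarrow> real" where
  "laplacian3 u p = (\<Sum>i\<in>UNIV. iter_pd [axis i 1, axis i 1] u p)"

definition zcoord :: "real^3 \<Rightarrow> complex" where
  "zcoord p = Complex (p $ 1) (p $ 2)"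

definition solves_eq :: "complex poly \<Rightarrow> (real^3 \<Rightarrow> real) \<Rightarrow> bool" where
  "solves_eq P u \<longleftrightarrow> smooth_on halfspaceX u \<and>
     (\<forall>p\<in>halfspaceX. laplacian3 u p + exp (-2 * u p) * (cmod (poly P (zcoord p)))\<^sup>2 = 0)"

end

theory Submission
  imports Defs
begin

text \<open>Since \<open>exp (-2 * u)\<close> is decreasing in \<open>u\<close>, the difference \<open>w = v2 - v1 \<ge> 0\<close> is
  subharmonic: \<open>\<Delta>w = (exp (-2 * v1) - exp (-2 * v2)) |P|\<^sup>2 \<ge> 0\<close>. A Phragmen-Lindeloef argument
  then gives \<open>w = 0\<close>. If \<open>w p0 = m > 0\<close>, compare \<open>w\<close> on a box \<open>|x - x0| \<le> L, s \<le> y \<le> R\<close>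
  with the quadratic barrier \<open>g = \<delta> y + \<eta> |x - x0|\<^sup>2 + 3 \<eta> (R\<^sup>2 - y\<^sup>2)\<close>, whose Laplacian
  is \<open>-2 \<eta> < 0\<close>. At an interior maximum of \<open>w - g\<close> the second derivatives would force
  \<open>\<Delta>w \<le> -2 \<eta>\<close>, so the maximum lies on a face. Because the bound \<open>C (y powr \<epsilon> + y powr (1 - \<epsilon>))\<close>
  tends to 0 at \<open>y = 0\<close> and grows sublinearly, suitable \<open>s, R, L, \<delta>, \<eta>\<close> make \<open>w - g < m/2\<close>
  on every face, whereas \<open>(w - g) p0 \<ge> m/2\<close>.\<close>

lemma local_max_imp_second_deriv_nonpos:
  fixes f f' :: "real \<Rightarrow> real"
  assumes "r > 0"
    and f': "\<And>t. \<bar>t\<bar> < r \<Longrightarrow> (f has_real_derivative f' t) (at t)"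
    and f'': "(f' has_real_derivative E) (at 0)"
    and max: "\<And>t. \<bar>t\<bar> < r \<Longrightarrow> f t \<le> f 0"
  shows "E \<le> 0"
proof (rule ccontr)
  assume "\<not> E \<le> 0"
  then obtain d where d: "d > 0" "\<And>h. 0 < h \<Longrightarrow> h < d \<Longrightarrow> f' 0 < f' h"
    using DERIV_pos_inc_right[OF f''] by force
  have "f' 0 = 0"
    by (rule DERIV_local_max[OF f' \<open>r > 0\<close>]) (use \<open>r > 0\<close> max in auto)
  define t where "t = min d r / 2"
  have t: "0 < t" "t < d" "t < r"
    using d \<open>r > 0\<close> by (auto simp: t_def)
  have "f 0 < f t"
  proof (rule DERIV_pos_imp_increasing_open[OF \<open>0 < t\<close>])
    show "continuous_on {0..t} f"
      by (rule DERIV_atLeastAtMost_imp_continuous_on) (use f' t in force)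
    fix x assume "0 < x" "x < t"
    then show "\<exists>y. (f has_real_derivative y) (at x) \<and> 0 < y"
      using f' d(2) t \<open>f' 0 = 0\<close> by force
  qed
  with max[of t] t show False by auto
qed

lemma has_real_derivative_along_line:
  fixes v :: "'a::real_normed_vector \<Rightarrow> real"
  assumes "(v has_derivative D) (at (q + t *\<^sub>R e))"
  shows "((\<lambda>s. v (q + s *\<^sub>R e)) has_real_derivative D e) (at t)"
proof -
  have "((v \<circ> (\<lambda>s. q + s *\<^sub>R e)) has_derivative D \<circ> (\<lambda>h. h *\<^sub>R e)) (at t)"
    by (rule diff_chain_at) (use assms in \<open>auto intro!: derivative_eq_intros\<close>)
  moreover have "D \<circ> (\<lambda>h. h *\<^sub>R e) = (*) (D e)"
    using linear_scale[OF has_derivative_linear[OF assms]] by (auto simp: fun_eq_iff)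
  ultimately show ?thesis
    by (simp add: has_field_derivative_def o_def)
qed

lemma smooth_on_iter_pd_has_derivative:
  assumes "smooth_on S f" "open S" "x \<in> S" "set vs \<subseteq> Basis"
  shows "(iter_pd vs f has_derivative frechet_derivative (iter_pd vs f) (at x)) (at x)"
  using assms unfolding smooth_on_def
  by (metis differentiable_on_eq_differentiable_at frechet_derivative_works)

lemma smooth_on_imp_continuous_on:
  assumes "smooth_on S f"
  shows "continuous_on S f"
proof -
  have "iter_pd [] f differentiable_on S"
    using assms unfolding smooth_on_def by (metis empty_set empty_subsetI)
  then show ?thesis by (simp add: differentiable_imp_continuous_on)
qed

lemma iter_pd_diff:
  assumes "smooth_on S f" "smooth_on S g" "open S" "set vs \<subseteq> Basis" "x \<in> S"
  shows "iter_pd vs (\<lambda>p. f p - g p) x = iter_pd vs f x - iter_pd vs g x"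
  using assms(4,5)
proof (induction vs arbitrary: x)
  case Nil
  then show ?case by simp
next
  case (Cons e vs)
  have "((\<lambda>p. iter_pd vs f p - iter_pd vs g p) has_derivative
      (\<lambda>h. frechet_derivative (iter_pd vs f) (at x) h - frechet_derivative (iter_pd vs g) (at x) h)) (at x)"
    using Cons.prems assms(1-3)
    by (intro has_derivative_diff smooth_on_iter_pd_has_derivative) auto
  then have "(iter_pd vs (\<lambda>p. f p - g p) has_derivative
      (\<lambda>h. frechet_derivative (iter_pd vs f) (at x) h - frechet_derivative (iter_pd vs g) (at x) h)) (at x)"
    by (rule has_derivative_transform_within_open[OF _ assms(3) Cons.prems(2)])
      (use Cons in simp)
  then show ?case
    by (simp add: frechet_derivative_at[symmetric])
qed

lemma smooth_on_diff:
  assumes "smooth_on S f" "smooth_on S g" "open S"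
  shows "smooth_on S (\<lambda>p. f p - g p)"
  unfolding smooth_on_def
proof (intro allI impI)
  fix vs :: "'a list" assume vs: "set vs \<subseteq> Basis"
  have "(\<lambda>p. iter_pd vs f p - iter_pd vs g p) differentiable_on S"
    using assms vs unfolding smooth_on_def by (intro differentiable_on_diff) auto
  then show "iter_pd vs (\<lambda>p. f p - g p) differentiable_on S"
    unfolding differentiable_on_eq_differentiable_at[OF \<open>open S\<close>]
  proof (intro ballI)
    fix x assume "x \<in> S" "\<forall>x\<in>S. (\<lambda>p. iter_pd vs f p - iter_pd vs g p) differentiable at x"
    then obtain D where "((\<lambda>p. iter_pd vs f p - iter_pd vs g p) has_derivative D) (at x)"
      unfolding differentiable_def by blast
    then have "(iter_pd vs (\<lambda>p. f p - g p) has_derivative D) (at x)"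
      by (rule has_derivative_transform_within_open[OF _ \<open>open S\<close> \<open>x \<in> S\<close>])
        (simp add: iter_pd_diff[OF assms vs])
    then show "iter_pd vs (\<lambda>p. f p - g p) differentiable at x"
      unfolding differentiable_def by blast
  qed
qed

lemma laplacian3_diff:
  assumes "smooth_on S f" "smooth_on S g" "open S" "x \<in> S"
  shows "laplacian3 (\<lambda>p. f p - g p) x = laplacian3 f x - laplacian3 g x"
  unfolding laplacian3_def sum_subtractf[symmetric]
  by (intro sum.cong refl iter_pd_diff[OF assms(1-3) _ assms(4)]) auto

lemma second_partial_le_at_line_max:
  assumes "smooth_on S w" "open S" "q \<in> S" "e \<in> Basis" "r > 0"
    and line: "\<And>t. \<bar>t\<bar> < r \<Longrightarrow> q + t *\<^sub>R e \<in> S"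
    and G': "\<And>t. (G has_real_derivative G' t) (at t)"
    and G'': "(G' has_real_derivative c) (at 0)"
    and max: "\<And>t. \<bar>t\<bar> < r \<Longrightarrow> w (q + t *\<^sub>R e) - G t \<le> w q - G 0"
  shows "iter_pd [e, e] w q \<le> c"
proof -
  have Dw: "(iter_pd vs w has_derivative frechet_derivative (iter_pd vs w) (at p)) (at p)"
    if "p \<in> S" "set vs \<subseteq> {e}" for p vs
    using smooth_on_iter_pd_has_derivative[OF assms(1,2) that(1)] that(2) \<open>e \<in> Basis\<close> by blast
  let ?f = "\<lambda>t. w (q + t *\<^sub>R e) - G t"
  let ?f' = "\<lambda>t. frechet_derivative w (at (q + t *\<^sub>R e)) e - G' t"
  have f': "(?f has_real_derivative ?f' t) (at t)" if "\<bar>t\<bar> < r" for t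
    using Dw[of _ "[]"] line[OF that]
    by (intro derivative_intros has_real_derivative_along_line G') auto
  have f'': "(?f' has_real_derivative iter_pd [e, e] w q - c) (at 0)"
    using Dw[of _ "[e]"] \<open>q \<in> S\<close>
    by (intro derivative_intros has_real_derivative_along_line G'') auto
  have "iter_pd [e, e] w q - c \<le> 0"
    by (rule local_max_imp_second_deriv_nonpos[OF \<open>r > 0\<close> f' f'']) (use max in auto)
  then show ?thesis by simp
qed

lemma laplacian3_le_at_local_max:
  fixes w :: "real^3 \<Rightarrow> real" and G G' :: "3 \<Rightarrow> real \<Rightarrow> real"
  assumes "smooth_on S w" "open S" "r > 0" "ball q r \<subseteq> S"
    and G': "\<And>i t. (G i has_real_derivative G' i t) (at t)"
    and G'': "\<And>i. (G' i has_real_derivative c i) (at (q $ i))"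
    and max: "\<And>p. p \<in> ball q r \<Longrightarrow> w p - (\<Sum>i\<in>UNIV. G i (p $ i)) \<le> w q - (\<Sum>i\<in>UNIV. G i (q $ i))"
  shows "laplacian3 w q \<le> (\<Sum>i\<in>UNIV. c i)"
  unfolding laplacian3_def
proof (rule sum_mono)
  fix i :: 3
  define e :: "real^3" where "e = axis i 1"
  have line: "q + t *\<^sub>R e \<in> ball q r" if "\<bar>t\<bar> < r" for t
    using that by (simp add: e_def dist_norm)
  have sum_line: "(\<Sum>j\<in>UNIV. G j ((q + t *\<^sub>R e) $ j)) = (\<Sum>j\<in>UNIV. G j (q $ j)) - G i (q $ i) + G i (q $ i + t)"
    for t
  proof -
    have "(\<Sum>j\<in>UNIV. G j ((q + t *\<^sub>R e) $ j)) = G i (q $ i + t) + (\<Sum>j\<in>UNIV - {i}. G j (q $ j))"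
      by (simp add: sum.remove[of UNIV i] e_def axis_def)
    also have "(\<Sum>j\<in>UNIV - {i}. G j (q $ j)) = (\<Sum>j\<in>UNIV. G j (q $ j)) - G i (q $ i)"
      by (simp add: sum_diff1)
    finally show ?thesis by simp
  qed
  show "iter_pd [axis i 1, axis i 1] w q \<le> c i"
    unfolding e_def[symmetric]
  proof (rule second_partial_le_at_line_max[OF assms(1,2)])
    show "q \<in> S" "e \<in> Basis" "r > 0"
      using assms(3,4) by (auto simp: e_def)
    show "q + t *\<^sub>R e \<in> S" if "\<bar>t\<bar> < r" for t
      using line[OF that] assms(4) by blast
    show "((\<lambda>t. G i (q $ i + t)) has_real_derivative G' i (q $ i + t)) (at t)" for t
      using DERIV_shift[of "G i" "G' i (q $ i + t)" t "q $ i"] G' by (simp add: add.commute)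
    show "((\<lambda>t. G' i (q $ i + t)) has_real_derivative c i) (at 0)"
      using DERIV_shift[of "G' i" "c i" 0 "q $ i"] G'' by (simp add: add.commute)
    show "w (q + t *\<^sub>R e) - G i (q $ i + t) \<le> w q - G i (q $ i + 0)" if "\<bar>t\<bar> < r" for t
      using max[OF line[OF that]] sum_line[of t] by simp
  qed
qed

lemma barrier_max_on_box_boundary:
  fixes w :: "real^3 \<Rightarrow> real" and G G' :: "3 \<Rightarrow> real \<Rightarrow> real"
  assumes "smooth_on S w" "open S" "cbox lo hi \<subseteq> S" "cbox lo hi \<noteq> {}"
    and subharmonic: "\<And>p. p \<in> S \<Longrightarrow> 0 \<le> laplacian3 w p"
    and G': "\<And>i t. (G i has_real_derivative G' i t) (at t)"
    and G'': "\<And>i t. (G' i has_real_derivative c i) (at t)"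
    and strict: "(\<Sum>i\<in>UNIV. c i) < 0"
  shows "\<exists>q\<in>cbox lo hi - box lo hi. \<forall>p\<in>cbox lo hi.
           w p - (\<Sum>i\<in>UNIV. G i (p $ i)) \<le> w q - (\<Sum>i\<in>UNIV. G i (q $ i))"
proof -
  let ?\<phi> = "\<lambda>p. w p - (\<Sum>i\<in>UNIV. G i (p $ i))"
  have "continuous_on A (\<lambda>p. G i (p $ i))" for i and A :: "(real^3) set"
  proof (rule continuous_on_compose2[of UNIV "G i"])
    show "continuous_on UNIV (G i)"
      using G' by (meson DERIV_isCont continuous_at_imp_continuous_on)
  qed (auto intro: continuous_on_component continuous_on_id)
  then have "continuous_on (cbox lo hi) ?\<phi>"
    using continuous_on_subset[OF smooth_on_imp_continuous_on[OF assms(1)] assms(3)]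
    by (intro continuous_on_diff continuous_on_sum) auto
  then obtain q where q: "q \<in> cbox lo hi" and q_max: "\<And>p. p \<in> cbox lo hi \<Longrightarrow> ?\<phi> p \<le> ?\<phi> q"
    using continuous_attains_sup[OF compact_cbox assms(4)] by blast
  have "q \<notin> box lo hi"
  proof
    assume "q \<in> box lo hi"
    then obtain r where "r > 0" "ball q r \<subseteq> box lo hi"
      using open_box open_contains_ball by blast
    then have ball: "ball q r \<subseteq> cbox lo hi"
      using box_subset_cbox by blast
    have "laplacian3 w q \<le> (\<Sum>i\<in>UNIV. c i)"
      by (rule laplacian3_le_at_local_max[OF assms(1,2) \<open>r > 0\<close> _ G' G''])
        (use ball assms(3) q_max in auto)
    with strict subharmonic[of q] q assms(3) show False by auto
  qed
  with q q_max show ?thesis by blast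
qed

lemma open_halfspaceX: "open halfspaceX"
  unfolding halfspaceX_def by (intro open_Collect_less continuous_intros)

lemma cbox_minus_box_cart:
  fixes q lo hi :: "real^'n"
  assumes "q \<in> cbox lo hi - box lo hi"
  obtains i where "q $ i = lo $ i \<or> q $ i = hi $ i"
proof -
  obtain i where "\<not> (lo $ i < q $ i \<and> q $ i < hi $ i)"
    using assms unfolding Diff_iff mem_box_cart by blast
  moreover have "lo $ i \<le> q $ i" "q $ i \<le> hi $ i"
    using assms unfolding Diff_iff mem_box_cart by blast+
  ultimately have "q $ i = lo $ i \<or> q $ i = hi $ i"
    by auto
  then show thesis
    by (rule that)
qed

lemma subharmonic_slab_barrier_estimate:
  fixes w :: "real^3 \<Rightarrow> real" and B :: "real \<Rightarrow> real"
  assumes smooth: "smooth_on halfspaceX w"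
    and subharmonic: "\<And>p. p \<in> halfspaceX \<Longrightarrow> 0 \<le> laplacian3 w p"
    and bound: "\<And>p. p \<in> halfspaceX \<Longrightarrow> w p \<le> B (p $ 3)"
    and B_mono: "mono_on {0<..} B"
    and "0 < s" "s \<le> p0 $ 3" "p0 $ 3 \<le> R" "0 \<le> \<delta>" "0 < \<eta>" "0 \<le> L"
  shows "w p0 \<le> max (B s) (max (B R - \<delta> * R) (B R - \<eta> * L\<^sup>2)) + \<delta> * p0 $ 3 + 3 * \<eta> * R\<^sup>2"
proof -
  define G :: "3 \<Rightarrow> real \<Rightarrow> real"
    where "G i x = (if i = 3 then \<delta> * x + 3 * \<eta> * (R\<^sup>2 - x\<^sup>2) else \<eta> * (x - p0 $ i)\<^sup>2)" for i x
  define G' :: "3 \<Rightarrow> real \<Rightarrow> real"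
    where "G' i x = (if i = 3 then \<delta> - 6 * \<eta> * x else 2 * \<eta> * (x - p0 $ i))" for i x
  define c :: "3 \<Rightarrow> real" where "c i = (if i = 3 then - 6 * \<eta> else 2 * \<eta>)" for i
  define lo :: "real^3" where "lo = (\<chi> i. if i = 3 then s else p0 $ i - L)"
  define hi :: "real^3" where "hi = (\<chi> i. if i = 3 then R else p0 $ i + L)"
  define M where "M = max (B s) (max (B R - \<delta> * R) (B R - \<eta> * L\<^sup>2))"
  \<comment> \<open>\<open>\<Sum>i. G i (p $ i)\<close> is nonnegative on the box, at least \<open>\<delta>R\<close> on its top face and at least
    \<open>\<eta>L\<^sup>2\<close> on its lateral faces, so \<open>M\<close> bounds \<open>w - \<Sum>i. G i (p $ i)\<close> on the boundary.\<close>
  have box_bounds: "lo $ i \<le> q $ i" "q $ i \<le> hi $ i" if "q \<in> cbox lo hi" for q i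
    using that unfolding mem_box_cart by blast+
  have box_X: "cbox lo hi \<subseteq> halfspaceX"
    using box_bounds[of _ 3] \<open>0 < s\<close> by (force simp: halfspaceX_def lo_def)
  have p0: "p0 \<in> cbox lo hi"
    unfolding mem_box_cart
  proof
    fix i :: 3
    show "lo $ i \<le> p0 $ i \<and> p0 $ i \<le> hi $ i"
      using assms(6,7,10) by (cases "i = 3") (simp_all add: lo_def hi_def)
  qed
  have G': "(G i has_real_derivative G' i t) (at t)" and G'': "(G' i has_real_derivative c i) (at t)" for i t
    unfolding G_def G'_def c_def by (cases "i = 3"; auto intro!: derivative_eq_intros)+
  have "(\<Sum>i\<in>UNIV. c i) < 0"
    using \<open>0 < \<eta>\<close> by (simp add: sum_3 c_def)
  from barrier_max_on_box_boundary[OF smooth open_halfspaceX box_X _ subharmonic G' G'' this]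
  obtain q where q: "q \<in> cbox lo hi - box lo hi"
    and q_max: "w p0 - (\<Sum>i\<in>UNIV. G i (p0 $ i)) \<le> w q - (\<Sum>i\<in>UNIV. G i (q $ i))"
    using p0 by blast
  have G_nonneg: "0 \<le> G i (q $ i)" for i
  proof (cases "i = 3")
    case True
    then show ?thesis
      using box_bounds[of q 3] q \<open>0 < s\<close> \<open>0 \<le> \<delta>\<close> \<open>0 < \<eta>\<close>
      by (simp add: G_def lo_def hi_def power_mono)
  qed (use \<open>0 < \<eta>\<close> in \<open>simp add: G_def\<close>)
  then have G_le_sum: "G i (q $ i) \<le> (\<Sum>j\<in>UNIV. G j (q $ j))" for i
    by (intro member_le_sum) auto
  have "w q \<le> B (q $ 3)" "B (q $ 3) \<le> B R"
    using bound[of q] box_X q box_bounds[of q 3] \<open>0 < s\<close> mono_onD[OF B_mono]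
    by (auto simp: lo_def hi_def)
  obtain i where "q $ i = lo $ i \<or> q $ i = hi $ i"
    using cbox_minus_box_cart[OF q] .
  then consider "i = 3" "q $ 3 = s" | "i = 3" "q $ 3 = R" | "i \<noteq> 3" "G i (q $ i) = \<eta> * L\<^sup>2"
    by (cases "i = 3") (auto simp: lo_def hi_def G_def)
  then have "w q - (\<Sum>i\<in>UNIV. G i (q $ i)) \<le> M"
  proof cases
    case 1
    then show ?thesis
      using \<open>w q \<le> B (q $ 3)\<close> sum_nonneg[of UNIV "\<lambda>j. G j (q $ j)"] G_nonneg
      by (force simp: M_def)
  next
    case 2
    then show ?thesis
      using G_le_sum[of 3] \<open>w q \<le> B (q $ 3)\<close> by (simp add: M_def G_def)
  next
    case 3
    then show ?thesis
      using G_le_sum[of i] \<open>w q \<le> B (q $ 3)\<close> \<open>B (q $ 3) \<le> B R\<close> by (simp add: M_def)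
  qed
  moreover have "(\<Sum>i\<in>UNIV. G i (p0 $ i)) \<le> \<delta> * p0 $ 3 + 3 * \<eta> * R\<^sup>2"
    using \<open>0 < \<eta>\<close> by (simp add: sum_3 G_def)
  ultimately show ?thesis
    using q_max by (simp add: M_def)
qed

lemma phragmen_lindelof_halfspaceX:
  fixes w :: "real^3 \<Rightarrow> real" and B :: "real \<Rightarrow> real"
  assumes smooth: "smooth_on halfspaceX w"
    and subharmonic: "\<And>p. p \<in> halfspaceX \<Longrightarrow> 0 \<le> laplacian3 w p"
    and bound: "\<And>p. p \<in> halfspaceX \<Longrightarrow> 0 \<le> w p \<and> w p \<le> B (p $ 3)"
    and B_mono: "mono_on {0<..} B"
    and B_boundary: "(B \<longlongrightarrow> 0) (at_right 0)"
    and B_sublinear: "((\<lambda>y. B y / y) \<longlongrightarrow> 0) at_top"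
    and "p0 \<in> halfspaceX"
  shows "w p0 = 0"
proof (rule ccontr)
  assume "w p0 \<noteq> 0"
  define m where "m = w p0"
  define y0 where "y0 = p0 $ 3"
  have "m > 0" "y0 > 0"
    using bound[of p0] \<open>w p0 \<noteq> 0\<close> \<open>p0 \<in> halfspaceX\<close> by (auto simp: m_def y0_def halfspaceX_def)
  obtain b where "b > 0" and b: "\<And>s. 0 < s \<Longrightarrow> s < b \<Longrightarrow> B s < m / 2"
    using order_tendstoD(2)[OF B_boundary, of "m / 2"] \<open>m > 0\<close>
    unfolding eventually_at_right_field by auto
  define s where "s = min b y0 / 2"
  have s: "0 < s" "s \<le> y0" "B s < m / 2"
    using b \<open>b > 0\<close> \<open>y0 > 0\<close> by (auto simp: s_def)
  \<comment> \<open>\<open>\<delta>\<close> and \<open>\<eta>\<close> make the barrier at most \<open>m/4 + m/4\<close> at \<open>p0\<close>.\<close>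
  define \<delta> where "\<delta> = m / (4 * y0)"
  obtain N where N: "\<And>R. R \<ge> N \<Longrightarrow> B R / R < \<delta>"
    using order_tendstoD(2)[OF B_sublinear, of \<delta>] \<open>m > 0\<close> \<open>y0 > 0\<close>
    unfolding eventually_at_top_linorder by (auto simp: \<delta>_def)
  define R where "R = max N y0"
  have R: "y0 \<le> R" "B R \<le> \<delta> * R"
    using N[of R] \<open>y0 > 0\<close> by (auto simp: R_def field_simps)
  have "0 \<le> B R"
    using bound[of p0] mono_onD[OF B_mono, of y0 R] \<open>p0 \<in> halfspaceX\<close> \<open>y0 > 0\<close> R
    by (simp add: y0_def)
  define \<eta> where "\<eta> = m / (12 * R\<^sup>2)"
  have "\<eta> > 0"
    using \<open>m > 0\<close> \<open>y0 > 0\<close> R by (simp add: \<eta>_def)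
  define L where "L = sqrt (B R / \<eta>)"
  have "0 \<le> L" "\<eta> * L\<^sup>2 = B R"
    using \<open>0 \<le> B R\<close> \<open>\<eta> > 0\<close> by (simp_all add: L_def)
  have "w p0 \<le> max (B s) (max (B R - \<delta> * R) (B R - \<eta> * L\<^sup>2)) + \<delta> * y0 + 3 * \<eta> * R\<^sup>2"
    unfolding y0_def
    by (rule subharmonic_slab_barrier_estimate[OF smooth subharmonic _ B_mono])
      (use bound s R \<open>m > 0\<close> \<open>y0 > 0\<close> \<open>\<eta> > 0\<close> \<open>0 \<le> L\<close> in \<open>auto simp: y0_def \<delta>_def\<close>)
  also have "\<dots> < m / 2 + m / 4 + m / 4"
    using s R \<open>\<eta> * L\<^sup>2 = B R\<close> \<open>m > 0\<close> \<open>y0 > 0\<close> by (simp add: \<delta>_def \<eta>_def)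
  finally show False
    by (simp add: m_def)
qed

lemma powr_tendsto_0_at_right:
  fixes a :: real
  assumes "a > 0"
  shows "((\<lambda>y. y powr a) \<longlongrightarrow> 0) (at_right 0)"
  by (rule tendsto_zero_powrI[OF _ tendsto_const _ assms])
    (auto simp: eventually_at_right_field intro: tendsto_ident_at exI[of _ 1])

lemma powr_div_tendsto_0_at_top:
  fixes a :: real
  assumes "a < 1"
  shows "((\<lambda>y. y powr a / y) \<longlongrightarrow> 0) at_top"
proof (rule Lim_transform_eventually)
  show "((\<lambda>y. y powr (a - 1)) \<longlongrightarrow> 0) at_top"
    using assms by (intro tendsto_neg_powr filterlim_ident) auto
  show "\<forall>\<^sub>F y in at_top. y powr (a - 1) = y powr a / y"
    using eventually_gt_at_top[of 0] by eventually_elim (simp add: powr_diff)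
qed

lemma solves_eq_diff_subharmonic:
  assumes "solves_eq P v1" "solves_eq P v2" "q \<in> halfspaceX" "v1 q \<le> v2 q"
  shows "0 \<le> laplacian3 (\<lambda>p. v2 p - v1 p) q"
proof -
  let ?P = "(cmod (poly P (zcoord q)))\<^sup>2"
  have pde: "laplacian3 v q = - exp (-2 * v q) * ?P" if "solves_eq P v" for v
    using that \<open>q \<in> halfspaceX\<close> by (simp add: solves_eq_def add_eq_0_iff)
  have "smooth_on halfspaceX v1" "smooth_on halfspaceX v2"
    using assms(1,2) by (simp_all add: solves_eq_def)
  moreover have "exp (-2 * v2 q) * ?P \<le> exp (-2 * v1 q) * ?P"
    using assms(4) by (intro mult_right_mono) auto
  ultimately show ?thesis
    using laplacian3_diff[OF _ _ open_halfspaceX assms(3)] pde[OF assms(1)] pde[OF assms(2)]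
    by simp
qed

theorem mainTheorem7:
  fixes P :: "complex poly" and v1 v2 :: "real^3 \<Rightarrow> real" and C \<epsilon> :: real
  assumes "P \<noteq> 0"
    and "solves_eq P v1" and "solves_eq P v2"
    and "C > 0" and "0 < \<epsilon>" and "\<epsilon> < 1"
    and "\<forall>p\<in>halfspaceX. 0 \<le> v2 p - v1 p \<and>
           v2 p - v1 p \<le> C * (p $ 3 powr \<epsilon> + p $ 3 powr (1 - \<epsilon>))"
  shows "\<forall>p\<in>halfspaceX. v1 p = v2 p"
proof
  fix p assume "p \<in> halfspaceX"
  define B where "B y = C * (y powr \<epsilon> + y powr (1 - \<epsilon>))" for y
  have smooth: "smooth_on halfspaceX v1" "smooth_on halfspaceX v2"
    using assms(2,3) by (simp_all add: solves_eq_def)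
  have "v2 p - v1 p = 0"
  proof (rule phragmen_lindelof_halfspaceX[where B = B])
    show "smooth_on halfspaceX (\<lambda>p. v2 p - v1 p)"
      by (rule smooth_on_diff[OF smooth(2,1) open_halfspaceX])
    show "0 \<le> laplacian3 (\<lambda>p. v2 p - v1 p) q" if "q \<in> halfspaceX" for q
      using solves_eq_diff_subharmonic[OF assms(2,3) that] assms(7) that by simp
    show "mono_on {0<..} B"
      using assms(4-6) by (auto intro!: mono_onI mult_left_mono add_mono powr_mono2 simp: B_def)
    have "(B \<longlongrightarrow> C * (0 + 0)) (at_right 0)"
      unfolding B_def using assms(5,6) by (intro tendsto_intros powr_tendsto_0_at_right) auto
    then show "(B \<longlongrightarrow> 0) (at_right 0)" by simp
    have "((\<lambda>y. C * (y powr \<epsilon> / y + y powr (1 - \<epsilon>) / y)) \<longlongrightarrow> C * (0 + 0)) at_top"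
      using assms(5,6) by (intro tendsto_intros powr_div_tendsto_0_at_top) auto
    then show "((\<lambda>y. B y / y) \<longlongrightarrow> 0) at_top"
      by (simp add: B_def add_divide_distrib times_divide_eq_right[symmetric] del: times_divide_eq_right)
  qed (use assms(7) \<open>p \<in> halfspaceX\<close> in \<open>simp_all add: B_def\<close>)
  then show "v1 p = v2 p" by simp
qed

end
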